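(* Let $\rho>0$, $\xi\in\mathbb{R}$, and $H=\frac{1}{2(1+\rho u^2)}\big(u^2(P_u^2+P_y^2)+\xi\big)$ on $(u,y)\in(0,\infty)\times\mathbb{R}$. On the level set $H=E$, $P_y=L>0$ with $2E=\xi$, the projections to the $(u,y)$-plane of the trajectories of the Hamiltonian flow degenerate into the lines $$u=\sqrt{\frac{2\rho E-L^2}{L^2}}\,|y-y_0|,\qquad u\in(0,+\infty),$$ for some $y_0\in\mathbb{R}$. *)

theory Defs
  imports Complex_Main
begin

definition hamH :: "real \<Rightarrow> real \<Rightarrow> real \<Rightarrow> real \<Rightarrow> real \<Rightarrow> real \<Rightarrow> real" where
  "hamH \<rho> \<xi> u y pu py = (u^2 * (pu^2 + py^2) + \<xi>) / (2 * (1 + \<rho> * u^2))"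

end

theory Submission
  imports Defs "HOL-Analysis.Analysis"
begin

text \<open>On the level set \<open>H = E\<close> with \<open>\<xi> = 2E\<close> the energy equation collapses to
  \<open>P\<^sub>u\<^sup>2 + P\<^sub>y\<^sup>2 = 2\<rho>E\<close>, so with \<open>P\<^sub>y = L\<close> the momentum \<open>P\<^sub>u\<close> can only take the two values
  \<open>\<plusminus>\<surd>(2\<rho>E - L\<^sup>2)\<close>; being continuous on an interval, it is a constant \<open>p\<close>. Hamilton's equations
  give \<open>u' : y' = P\<^sub>u : P\<^sub>y = p : L\<close>, hence \<open>u - (p/L) y\<close> is conserved, and positivity of \<open>u\<close>
  turns this line into \<open>u = |p/L| |y - y\<^sub>0|\<close>.\<close>

lemma hamH_has_derivative_pu:
  assumes "1 + \<rho> * a^2 \<noteq> 0"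
  shows "((\<lambda>s. hamH \<rho> \<xi> a b s q) has_real_derivative a^2 * p / (1 + \<rho> * a^2)) (at p)"
proof -
  have "((\<lambda>s. hamH \<rho> \<xi> a b s q) has_real_derivative
        (a^2 * (2 * p ^ 1 * 1 + 0) + 0) / (2 * (1 + \<rho> * a^2))) (at p)"
    unfolding hamH_def divide_inverse using assms
    by (intro derivative_eq_intros) (auto simp: algebra_simps)
  moreover have "(a^2 * (2 * p ^ 1 * 1 + 0) + 0) / (2 * (1 + \<rho> * a^2)) = a^2 * p / (1 + \<rho> * a^2)"
    using assms by (simp add: field_simps)
  ultimately show ?thesis by simp
qed

lemma hamH_has_derivative_py:
  assumes "1 + \<rho> * a^2 \<noteq> 0"
  shows "((\<lambda>s. hamH \<rho> \<xi> a b p s) has_real_derivative a^2 * q / (1 + \<rho> * a^2)) (at q)"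
proof -
  have "((\<lambda>s. hamH \<rho> \<xi> a b p s) has_real_derivative
        (a^2 * (0 + 2 * q ^ 1 * 1) + 0) / (2 * (1 + \<rho> * a^2))) (at q)"
    unfolding hamH_def divide_inverse using assms
    by (intro derivative_eq_intros) (auto simp: algebra_simps)
  moreover have "(a^2 * (0 + 2 * q ^ 1 * 1) + 0) / (2 * (1 + \<rho> * a^2)) = a^2 * q / (1 + \<rho> * a^2)"
    using assms by (simp add: field_simps)
  ultimately show ?thesis by simp
qed

lemma hamH_velocity_ratio:
  assumes "1 + \<rho> * a^2 \<noteq> 0"
    and "((\<lambda>s. hamH \<rho> \<xi> a b s q) has_real_derivative du) (at p)"
    and "((\<lambda>s. hamH \<rho> \<xi> a b p s) has_real_derivative dy) (at q)"
  shows "q * du = p * dy"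
proof -
  have "du = a^2 * p / (1 + \<rho> * a^2)"
    using DERIV_unique[OF assms(2) hamH_has_derivative_pu[OF assms(1)]] .
  moreover have "dy = a^2 * q / (1 + \<rho> * a^2)"
    using DERIV_unique[OF assms(3) hamH_has_derivative_py[OF assms(1)]] .
  ultimately show ?thesis by simp
qed

lemma hamH_eq_half_xi_iff:
  assumes "a \<noteq> 0" and "1 + \<rho> * a^2 \<noteq> 0"
  shows "hamH \<rho> (2 * E) a b p q = E \<longleftrightarrow> p^2 + q^2 = 2 * \<rho> * E"
proof -
  have "hamH \<rho> (2 * E) a b p q = E \<longleftrightarrow> a^2 * (p^2 + q^2 - 2 * \<rho> * E) = 0"
    using assms(2) unfolding hamH_def by (auto simp: field_simps)
  also have "\<dots> \<longleftrightarrow> p^2 + q^2 = 2 * \<rho> * E"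
    using assms(1) by simp
  finally show ?thesis .
qed

lemma proportional_derivatives_imp_affine:
  fixes u y :: "real \<Rightarrow> real"
  assumes "open S" "connected S" "a \<noteq> 0"
    and deriv: "\<forall>t\<in>S. \<exists>du dy. (u has_real_derivative du) (at t) \<and>
                  (y has_real_derivative dy) (at t) \<and> a * du = b * dy"
  shows "\<exists>C. \<forall>t\<in>S. u t = b / a * y t + C"
proof -
  have "continuous_on S (\<lambda>t. u t - b / a * y t)"
  proof (rule continuous_at_imp_continuous_on, intro ballI)
    fix t assume "t \<in> S"
    then have "isCont u t" "isCont y t"
      using deriv by (auto intro: DERIV_isCont)
    then show "isCont (\<lambda>t. u t - b / a * y t) t"
      by (intro continuous_intros)
  qed
  moreover have "\<forall>t\<in>S - {}. ((\<lambda>t. u t - b / a * y t) has_real_derivative 0) (at t)"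
  proof
    fix t assume "t \<in> S - {}"
    then obtain du dy where "(u has_real_derivative du) (at t)" "(y has_real_derivative dy) (at t)"
      and ratio: "a * du = b * dy"
      using deriv by blast
    from this(1,2) have "((\<lambda>t. u t - b / a * y t) has_real_derivative du - b / a * dy) (at t)"
      using \<open>a \<noteq> 0\<close> by (auto intro!: derivative_eq_intros)
    moreover have "du = b / a * dy"
      using ratio \<open>a \<noteq> 0\<close>
      by (metis mult.commute nonzero_mult_div_cancel_left times_divide_eq_left)
    ultimately show "((\<lambda>t. u t - b / a * y t) has_real_derivative 0) (at t)"
      by simp
  qed
  ultimately obtain C where "\<And>t. t \<in> S \<Longrightarrow> u t - b / a * y t = C"
    using DERIV_zero_connected_constant[OF assms(2,1) finite.emptyI] by blast
  then show ?thesis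
    by (metis diff_eq_eq add.commute)
qed

lemma continuous_constant_square_imp_constant:
  fixes f :: "'a::topological_space \<Rightarrow> real"
  assumes "connected S" "continuous_on S f" "\<forall>x\<in>S. (f x)^2 = c"
  shows "\<exists>a. \<forall>x\<in>S. f x = a"
proof -
  have "f ` S \<subseteq> {sqrt c, - sqrt c}"
  proof
    fix z assume "z \<in> f ` S"
    then have "sqrt c = \<bar>z\<bar>"
      using assms(3) by auto
    then show "z \<in> {sqrt c, - sqrt c}"
      by (auto simp: abs_if)
  qed
  then have "finite (f ` S)"
    by (rule finite_subset) simp
  then show ?thesis
    using continuous_finite_range_constant[OF assms(1,2)] unfolding constant_on_def by blast
qed

lemma pos_affine_eq_abs_line:
  fixes u k y C :: real
  assumes "u > 0" "k \<noteq> 0" "u = k * y + C"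
  shows "u = \<bar>k\<bar> * \<bar>y - (- C / k)\<bar>"
proof -
  have "u = k * (y - (- C / k))"
    using assms(2,3) by (simp add: field_simps)
  then show ?thesis
    using assms(1) by (metis abs_mult abs_of_pos)
qed

theorem proposition17:
  fixes \<rho> \<xi> E L :: real and I :: "real set"
    and u y pu py :: "real \<Rightarrow> real"
  assumes rho: "\<rho> > 0"
    and L: "L > 0"
    and xi: "2 * E = \<xi>"
    and nondeg: "L^2 < 2 * \<rho> * E"
    and I: "open I" "connected I"
    and upos: "\<forall>t\<in>I. u t > 0"
    and level: "\<forall>t\<in>I. hamH \<rho> \<xi> (u t) (y t) (pu t) (py t) = E"
    and momentum: "\<forall>t\<in>I. py t = L"
    and hamilton: "\<forall>t\<in>I. \<exists>du dy dpu dpy.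
        (u has_real_derivative du) (at t) \<and> (y has_real_derivative dy) (at t) \<and>
        (pu has_real_derivative dpu) (at t) \<and> (py has_real_derivative dpy) (at t) \<and>
        ((\<lambda>s. hamH \<rho> \<xi> (u t) (y t) s (py t)) has_real_derivative du) (at (pu t)) \<and>
        ((\<lambda>s. hamH \<rho> \<xi> (u t) (y t) (pu t) s) has_real_derivative dy) (at (py t)) \<and>
        ((\<lambda>s. hamH \<rho> \<xi> s (y t) (pu t) (py t)) has_real_derivative (- dpu)) (at (u t)) \<and>
        ((\<lambda>s. hamH \<rho> \<xi> (u t) s (pu t) (py t)) has_real_derivative (- dpy)) (at (y t))"
  shows "\<exists>y0. \<forall>t\<in>I. u t = sqrt ((2 * \<rho> * E - L^2) / L^2) * \<bar>y t - y0\<bar>"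
proof (cases "I = {}")
  case False
  have denom: "1 + \<rho> * (u t)^2 \<noteq> 0" for t
    using rho by (metis add_pos_nonneg less_imp_le less_numeral_extra(3) mult_nonneg_nonneg
        zero_le_power2 zero_less_one)
  have "\<forall>t\<in>I. (pu t)^2 = 2 * \<rho> * E - L^2"
    using hamH_eq_half_xi_iff[OF _ denom] level momentum upos xi
    by (metis less_irrefl eq_diff_eq)
  moreover have "continuous_on I pu"
    using hamilton by (intro continuous_at_imp_continuous_on) (blast intro: DERIV_isCont)
  ultimately obtain p where p: "\<forall>t\<in>I. pu t = p" and p_sq: "p^2 = 2 * \<rho> * E - L^2"
    using continuous_constant_square_imp_constant[OF I(2)] False by (metis equals0I)
  have velocity: "\<forall>t\<in>I. \<exists>du dy. (u has_real_derivative du) (at t) \<and>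
          (y has_real_derivative dy) (at t) \<and> L * du = p * dy"
    using hamilton hamH_velocity_ratio[OF denom] p momentum by metis
  obtain C where C: "\<forall>t\<in>I. u t = p / L * y t + C"
    using proportional_derivatives_imp_affine[OF I _ velocity] L by auto
  have "p \<noteq> 0"
    using p_sq nondeg by auto
  then have line: "u t = \<bar>p / L\<bar> * \<bar>y t - (- C / (p / L))\<bar>" if "t \<in> I" for t
    using upos C L that by (intro pos_affine_eq_abs_line) auto
  have "(2 * \<rho> * E - L^2) / L^2 = (p / L)^2"
    using p_sq by (simp add: power_divide)
  then have slope: "sqrt ((2 * \<rho> * E - L^2) / L^2) = \<bar>p / L\<bar>"
    by simp
  show ?thesis
    by (intro exI[of _ "- C / (p / L)"] ballI) (simp only: slope line)
qed simp

end
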